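(* Let $G$ be a connected graph on $n\ge 2$ vertices with Wiener index $W(G)$. Then $\gamma(G)\le \dfrac{n^2}{2W(G)}$, with equality if and only if $G$ is transmission-regular.
   Context: For a finite simple undirected graph $G$ with $n$ vertices, let $\mathcal{F}=\{x\in\mathbb{R}^{V(G)} : \sum_{v} x_v = 0,\ \|x\|_\infty = 1\}$, for $x\in\mathcal{F}$ let $\gamma_x(G)=\max_{uv\in E(G)}|x_u-x_v|$, and $\gamma(G)=\min_{x\in\mathcal{F}}\gamma_x(G)$. For a connected graph, $d(u,v)$ is shortest-path distance, $\operatorname{tr}(u)=\sum_v d(u,v)$, and $W(G)=\sum_{\{u,v\}}d(u,v)=\frac12\sum_u\operatorname{tr}(u)$ (sum over unordered pairs). $G$ is transmission-regular if all vertices have the same transmission. *)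

theory Defs
  imports Main Complex_Main
begin

text \<open>A finite simple undirected graph: vertex set is the (finite) universe of
the type 'a, edges given by a symmetric irreflexive relation E.\<close>

definition simple_graph :: "('a \<Rightarrow> 'a \<Rightarrow> bool) \<Rightarrow> bool" where
  "simple_graph E \<longleftrightarrow> (\<forall>u v. E u v \<longrightarrow> E v u) \<and> (\<forall>u. \<not> E u u)"

definition connected_graph :: "('a \<Rightarrow> 'a \<Rightarrow> bool) \<Rightarrow> bool" where
  "connected_graph E \<longleftrightarrow> (\<forall>u v. \<exists>k. (E ^^ k) u v)"

text \<open>Shortest-path distance (length of a shortest walk = shortest path).\<close>
definition gdist :: "('a \<Rightarrow> 'a \<Rightarrow> bool) \<Rightarrow> 'a \<Rightarrow> 'a \<Rightarrow> nat" where
  "gdist E u v = (LEAST k. (E ^^ k) u v)"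

definition transmission :: "('a::finite \<Rightarrow> 'a \<Rightarrow> bool) \<Rightarrow> 'a \<Rightarrow> nat" where
  "transmission E u = (\<Sum>v\<in>UNIV. gdist E u v)"

text \<open>Wiener index: sum of distances over unordered pairs = half the sum of transmissions.\<close>
definition wiener :: "('a::finite \<Rightarrow> 'a \<Rightarrow> bool) \<Rightarrow> real" where
  "wiener E = (\<Sum>u\<in>UNIV. real (transmission E u)) / 2"

definition transmission_regular :: "('a::finite \<Rightarrow> 'a \<Rightarrow> bool) \<Rightarrow> bool" where
  "transmission_regular E \<longleftrightarrow> (\<forall>u v. transmission E u = transmission E v)"

definition sup_norm :: "('a::finite \<Rightarrow> real) \<Rightarrow> real" where
  "sup_norm x = Max (range (\<lambda>v. \<bar>x v\<bar>))"

definition feasible :: "('a::finite \<Rightarrow> real) set" where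
  "feasible = {x. (\<Sum>v\<in>UNIV. x v) = 0 \<and> sup_norm x = 1}"

definition gamma_x :: "('a::finite \<Rightarrow> 'a \<Rightarrow> bool) \<Rightarrow> ('a \<Rightarrow> real) \<Rightarrow> real" where
  "gamma_x E x = Max {\<bar>x u - x v\<bar> | u v. E u v}"

text \<open>gamma(G) = min over the feasible set; the minimum is attained (compactness),
so it coincides with the infimum used here.\<close>
definition gamma :: "('a::finite \<Rightarrow> 'a \<Rightarrow> bool) \<Rightarrow> real" where
  "gamma E = Inf (gamma_x E ` feasible)"

end

theory Submission
  imports Defs
begin

(* For a vertex w, the distance profile v \<mapsto> 1 - n d(w,v) / tr(w) has sum zero, value 1 at w,
   and changes by at most n / tr(w) along every edge; normalised to sup norm 1 it shows
   gamma(G) tr(w) \<le> n for every w, and summing over w gives gamma(G) 2W(G) \<le> n^2.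
   Conversely, if x is feasible and |x u| = 1, then n = |\<Sum>v. x u - x v| \<le> tr(u) gamma_x(G),
   because x changes by at most gamma_x(G) along each edge of a shortest path. Equality in the sum forces
   gamma(G) tr(w) = n for all w, i.e. transmission-regularity; for a transmission-regular
   graph the lower bound n / tr meets the upper bound. *)

lemma gdist_walk:
  assumes "connected_graph E"
  shows "(E ^^ gdist E u v) u v"
  using assms unfolding connected_graph_def gdist_def by (metis LeastI_ex)

lemma gdist_le_walk:
  assumes "(E ^^ k) u v"
  shows "gdist E u v \<le> k"
  using assms unfolding gdist_def by (rule Least_le)

lemma gdist_self [simp]: "gdist E u u = 0"
  using gdist_le_walk[where k=0] by simp

lemma gdist_pos:
  assumes "connected_graph E" "u \<noteq> v"
  shows "gdist E u v > 0"
  using gdist_walk[OF assms(1), of u v] assms(2) by (cases "gdist E u v") auto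

lemma gdist_edge_le:
  assumes "connected_graph E" "E u v"
  shows "gdist E w v \<le> gdist E w u + 1"
  using gdist_le_walk[OF relpowp_Suc_I[OF gdist_walk[OF assms(1)] assms(2)]] by simp

lemma abs_gdist_diff_edge_le:
  assumes "simple_graph E" "connected_graph E" "E u v"
  shows "\<bar>real (gdist E w u) - real (gdist E w v)\<bar> \<le> 1"
proof -
  have "E v u" using assms(1,3) unfolding simple_graph_def by blast
  then show ?thesis
    using gdist_edge_le[OF assms(2,3), of w] gdist_edge_le[OF assms(2) \<open>E v u\<close>, of w]
    by linarith
qed

lemma abs_diff_le_walk_length:
  fixes x :: "'a \<Rightarrow> real"
  assumes "(E ^^ k) u v" and "\<And>a b. E a b \<Longrightarrow> \<bar>x a - x b\<bar> \<le> g"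
  shows "\<bar>x u - x v\<bar> \<le> real k * g"
  using assms(1)
proof (induction k arbitrary: v)
  case 0
  then show ?case by simp
next
  case (Suc k)
  then obtain y where y: "(E ^^ k) u y" "E y v" by (blast elim: relpowp_Suc_E)
  have "\<bar>x u - x v\<bar> \<le> \<bar>x u - x y\<bar> + \<bar>x y - x v\<bar>" by linarith
  also have "\<dots> \<le> real k * g + g" using Suc.IH[OF y(1)] assms(2)[OF y(2)] by linarith
  finally show ?case by (simp add: algebra_simps)
qed

lemma exists_other:
  fixes w :: "'a::finite"
  assumes "card (UNIV :: 'a set) \<ge> 2"
  obtains v where "v \<noteq> w"
proof -
  have "UNIV \<noteq> {w}"
  proof
    assume "UNIV = {w}"
    then have "card (UNIV :: 'a set) = card {w}" by (rule arg_cong)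
    with assms show False by simp
  qed
  then show ?thesis using that by blast
qed

lemma exists_edge:
  fixes E :: "'a::finite \<Rightarrow> 'a \<Rightarrow> bool"
  assumes "connected_graph E" "card (UNIV :: 'a set) \<ge> 2"
  obtains a b where "E a b"
proof -
  fix u :: 'a
  obtain v where "u \<noteq> v" using exists_other[OF assms(2)] by metis
  then obtain k where "gdist E u v = Suc k"
    using gdist_pos[OF assms(1) \<open>u \<noteq> v\<close>] by (cases "gdist E u v") auto
  then show ?thesis
    using gdist_walk[OF assms(1), of u v] that by (metis relpowp_Suc_D2)
qed

lemma transmission_pos:
  fixes E :: "'a::finite \<Rightarrow> 'a \<Rightarrow> bool"
  assumes "connected_graph E" "card (UNIV :: 'a set) \<ge> 2"
  shows "transmission E w > 0"
proof -
  obtain v where "v \<noteq> w" using exists_other[OF assms(2)] .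
  then have "0 < gdist E w v" using gdist_pos[OF assms(1)] by simp
  also have "\<dots> \<le> transmission E w"
    unfolding transmission_def by (rule member_le_sum) auto
  finally show ?thesis .
qed

lemma two_wiener_eq_sum_transmission:
  "2 * wiener E = (\<Sum>u\<in>UNIV. real (transmission E u))"
  unfolding wiener_def by simp

lemma abs_le_sup_norm: "\<bar>x v\<bar> \<le> sup_norm x"
  unfolding sup_norm_def by (rule Max_ge) auto

lemma sup_norm_attained:
  fixes x :: "'a::finite \<Rightarrow> real"
  obtains v where "\<bar>x v\<bar> = sup_norm x"
proof -
  have "sup_norm x \<in> range (\<lambda>v. \<bar>x v\<bar>)"
    unfolding sup_norm_def by (rule Max_in) auto
  then show ?thesis using that by auto
qed

lemma sup_norm_divide:
  fixes x :: "'a::finite \<Rightarrow> real"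
  assumes "c > 0"
  shows "sup_norm (\<lambda>v. x v / c) = sup_norm x / c"
proof -
  obtain v0 where v0: "\<bar>x v0\<bar> = sup_norm x" by (rule sup_norm_attained)
  have bound: "\<bar>x v / c\<bar> \<le> sup_norm x / c" for v
    using abs_le_sup_norm[of x v] assms by (simp add: abs_divide divide_right_mono)
  have attained: "sup_norm x / c = \<bar>x v0 / c\<bar>"
    using v0 assms by (simp add: abs_divide)
  show ?thesis
    unfolding sup_norm_def[of "\<lambda>v. x v / c"] by (rule Max_eqI) (use bound attained in auto)
qed

lemma normalised_in_feasible:
  fixes x :: "'a::finite \<Rightarrow> real"
  assumes "(\<Sum>v\<in>UNIV. x v) = 0" "sup_norm x > 0"
  shows "(\<lambda>v. x v / sup_norm x) \<in> feasible"
  using assms by (simp add: feasible_def sup_norm_divide flip: sum_divide_distrib)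

lemma finite_edge_differences:
  fixes x :: "'a::finite \<Rightarrow> real"
  shows "finite {\<bar>x u - x v\<bar> | u v. E u v}"
proof -
  have "{\<bar>x u - x v\<bar> | u v. E u v} \<subseteq> (\<lambda>(u, v). \<bar>x u - x v\<bar>) ` UNIV" by auto
  then show ?thesis by (rule finite_subset) auto
qed

lemma abs_diff_le_gamma_x:
  fixes x :: "'a::finite \<Rightarrow> real"
  assumes "E u v"
  shows "\<bar>x u - x v\<bar> \<le> gamma_x E x"
  unfolding gamma_x_def by (rule Max_ge[OF finite_edge_differences]) (use assms in blast)

lemma gamma_x_le:
  fixes x :: "'a::finite \<Rightarrow> real"
  assumes "E a b" and "\<And>u v. E u v \<Longrightarrow> \<bar>x u - x v\<bar> \<le> c"
  shows "gamma_x E x \<le> c"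
  unfolding gamma_x_def using assms by (subst Max_le_iff[OF finite_edge_differences]) auto

lemma gamma_x_divide_le:
  fixes x :: "'a::finite \<Rightarrow> real"
  assumes "E a b" "c > 0"
  shows "gamma_x E (\<lambda>v. x v / c) \<le> gamma_x E x / c"
proof (rule gamma_x_le[where E=E and a=a and b=b, OF assms(1)])
  fix u v assume "E u v"
  then have "\<bar>x u - x v\<bar> / c \<le> gamma_x E x / c"
    using abs_diff_le_gamma_x[where E=E, OF \<open>E u v\<close>] assms(2) by (simp add: divide_right_mono)
  then show "\<bar>x u / c - x v / c\<bar> \<le> gamma_x E x / c"
    using assms(2) by (simp add: abs_divide flip: diff_divide_distrib)
qed

lemma gamma_le_gamma_x:
  fixes x :: "'a::finite \<Rightarrow> real"
  assumes "E a b" "x \<in> feasible"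
  shows "gamma E \<le> gamma_x E x"
proof -
  have "bdd_below (gamma_x E ` feasible)"
    using abs_diff_le_gamma_x[where E=E and u=a and v=b, OF assms(1)] by (intro bdd_belowI[of _ 0]) (auto intro: order_trans[OF abs_ge_zero])
  then show ?thesis unfolding gamma_def using assms(2) by (simp add: cInf_lower)
qed

lemma distance_profile_gamma_x_le:
  assumes "simple_graph E" "connected_graph E" "E a b" "\<alpha> \<ge> 0"
  shows "gamma_x E (\<lambda>v. 1 - \<alpha> * real (gdist E w v)) \<le> \<alpha>"
proof (rule gamma_x_le[where E=E and a=a and b=b, OF assms(3)])
  fix u v assume "E u v"
  have "(1 - \<alpha> * real (gdist E w u)) - (1 - \<alpha> * real (gdist E w v))
      = \<alpha> * (real (gdist E w v) - real (gdist E w u))"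
    by (simp add: algebra_simps)
  then have "\<bar>(1 - \<alpha> * real (gdist E w u)) - (1 - \<alpha> * real (gdist E w v))\<bar>
      = \<alpha> * \<bar>real (gdist E w u) - real (gdist E w v)\<bar>"
    using assms(4) by (simp add: abs_mult abs_minus_commute)
  also have "\<dots> \<le> \<alpha>"
    using abs_gdist_diff_edge_le[OF assms(1,2) \<open>E u v\<close>] assms(4)
    by (simp add: mult_left_le)
  finally show "\<bar>(1 - \<alpha> * real (gdist E w u)) - (1 - \<alpha> * real (gdist E w v))\<bar> \<le> \<alpha>" .
qed

lemma exists_feasible_gamma_x_le_card_div_transmission:
  fixes E :: "'a::finite \<Rightarrow> 'a \<Rightarrow> bool"
  assumes "simple_graph E" "connected_graph E" "card (UNIV :: 'a set) \<ge> 2"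
  shows "\<exists>y\<in>feasible. gamma_x E y \<le> real (card (UNIV :: 'a set)) / transmission E w"
proof -
  define \<alpha> where "\<alpha> = real (card (UNIV :: 'a set)) / transmission E w"
  define x where "x = (\<lambda>v. 1 - \<alpha> * real (gdist E w v))"
  have tr_pos: "transmission E w > 0" using transmission_pos[OF assms(2,3)] .
  obtain a b where edge: "E a b" using exists_edge[OF assms(2,3)] .
  have "(\<Sum>v\<in>UNIV. x v) = card (UNIV :: 'a set) - \<alpha> * transmission E w"
    unfolding x_def transmission_def by (simp add: sum_subtractf sum_distrib_left)
  then have sum_x: "(\<Sum>v\<in>UNIV. x v) = 0"
    unfolding \<alpha>_def using tr_pos by simp
  have norm_x: "sup_norm x \<ge> 1"
    using abs_le_sup_norm[of x w] by (simp add: x_def)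
  have feasible: "(\<lambda>v. x v / sup_norm x) \<in> feasible"
    using normalised_in_feasible[OF sum_x] norm_x by simp
  have "gamma_x E (\<lambda>v. x v / sup_norm x) \<le> gamma_x E x / sup_norm x"
    using gamma_x_divide_le[where E=E and a=a and b=b, OF edge] norm_x by simp
  also have "\<dots> \<le> gamma_x E x"
    using divide_left_mono[of 1 "sup_norm x" "gamma_x E x"] norm_x
      abs_diff_le_gamma_x[where E=E and u=a and v=b, OF edge, of x]
    by simp
  also have "\<dots> \<le> \<alpha>"
    unfolding x_def
    by (rule distance_profile_gamma_x_le[where a=a and b=b, OF assms(1,2) edge]) (simp add: \<alpha>_def)
  finally show ?thesis using feasible unfolding \<alpha>_def by blast
qed

lemma card_le_transmission_mult_gamma_x:
  fixes x :: "'a::finite \<Rightarrow> real"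
  assumes "connected_graph E" "x \<in> feasible"
  obtains u where "real (card (UNIV :: 'a set)) \<le> transmission E u * gamma_x E x"
proof -
  obtain u where u: "\<bar>x u\<bar> = 1"
    using sup_norm_attained[of x] assms(2) unfolding feasible_def by auto
  have "real (card (UNIV :: 'a set)) = \<bar>\<Sum>v\<in>UNIV. x u - x v\<bar>"
    using assms(2) u unfolding feasible_def by (simp add: sum_subtractf abs_mult)
  also have "\<dots> \<le> (\<Sum>v\<in>UNIV. \<bar>x u - x v\<bar>)" by (rule sum_abs)
  also have "\<dots> \<le> (\<Sum>v\<in>UNIV. real (gdist E u v) * gamma_x E x)"
    by (intro sum_mono abs_diff_le_walk_length[OF gdist_walk[OF assms(1)]] abs_diff_le_gamma_x)
  also have "\<dots> = transmission E u * gamma_x E x"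
    unfolding transmission_def by (simp add: sum_distrib_right)
  finally show ?thesis using that by blast
qed

lemma gamma_mult_transmission_le:
  fixes E :: "'a::finite \<Rightarrow> 'a \<Rightarrow> bool"
  assumes "simple_graph E" "connected_graph E" "card (UNIV :: 'a set) \<ge> 2"
  shows "gamma E * transmission E w \<le> card (UNIV :: 'a set)"
proof -
  obtain y where y: "y \<in> feasible" "gamma_x E y \<le> card (UNIV :: 'a set) / transmission E w"
    using exists_feasible_gamma_x_le_card_div_transmission[OF assms] by blast
  obtain a b where edge: "E a b" using exists_edge[OF assms(2,3)] .
  have "gamma E \<le> gamma_x E y"
    by (rule gamma_le_gamma_x[where E=E and a=a and b=b, OF edge y(1)])
  also have "\<dots> \<le> card (UNIV :: 'a set) / transmission E w" by (rule y(2))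
  finally show ?thesis
    using transmission_pos[OF assms(2,3), of w] by (simp add: le_divide_eq)
qed

lemma card_div_le_gamma:
  fixes E :: "'a::finite \<Rightarrow> 'a \<Rightarrow> bool"
  assumes "simple_graph E" "connected_graph E" "card (UNIV :: 'a set) \<ge> 2"
    and "\<And>u. transmission E u \<le> t"
  shows "card (UNIV :: 'a set) / t \<le> gamma E"
  unfolding gamma_def
proof (rule cInf_greatest)
  show "gamma_x E ` feasible \<noteq> {}"
    using exists_feasible_gamma_x_le_card_div_transmission[OF assms(1-3)] by blast
next
  fix g assume "g \<in> gamma_x E ` feasible"
  then obtain x where "x \<in> feasible" "g = gamma_x E x" by blast
  then obtain u where card_le: "card (UNIV :: 'a set) \<le> transmission E u * g"
    using card_le_transmission_mult_gamma_x[OF assms(2)] by blast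
  have tr_pos: "0 < real (transmission E u)"
    using transmission_pos[OF assms(2,3)] by simp
  have "0 < real (card (UNIV :: 'a set))" using assms(3) by simp
  with card_le have "0 < g"
    using tr_pos by (metis order_less_le_trans zero_less_mult_pos)
  have tr_le: "real (transmission E u) \<le> t" using assms(4)[of u] by simp
  from card_le have "card (UNIV :: 'a set) \<le> t * g"
    using tr_le \<open>0 < g\<close> by (meson mult_right_mono less_imp_le order_trans)
  then show "card (UNIV :: 'a set) / t \<le> g"
    using tr_pos tr_le by (simp add: divide_le_eq mult.commute)
qed

lemma all_gamma_mult_transmission_eq_card_iff:
  fixes E :: "'a::finite \<Rightarrow> 'a \<Rightarrow> bool"
  assumes "simple_graph E" "connected_graph E" "card (UNIV :: 'a set) \<ge> 2"
  shows "(\<forall>u. gamma E * transmission E u = card (UNIV :: 'a set)) \<longleftrightarrow> transmission_regular E"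
proof
  assume all: "\<forall>u. gamma E * transmission E u = card (UNIV :: 'a set)"
  have "gamma E \<noteq> 0"
  proof
    assume "gamma E = 0"
    with all have "card (UNIV :: 'a set) = 0" by simp
    with assms(3) show False by simp
  qed
  then have "transmission E u = card (UNIV :: 'a set) / gamma E" for u
    using all by (simp add: eq_divide_eq mult.commute)
  then show "transmission_regular E"
    unfolding transmission_regular_def by (metis of_nat_eq_iff)
next
  assume "transmission_regular E"
  then have "card (UNIV :: 'a set) / transmission E w \<le> gamma E" for w
    unfolding transmission_regular_def by (intro card_div_le_gamma[OF assms]) (metis order_refl)
  then show "\<forall>u. gamma E * transmission E u = card (UNIV :: 'a set)"
    using gamma_mult_transmission_le[OF assms] transmission_pos[OF assms(2,3)]
    by (smt (verit) divide_le_eq mult.commute of_nat_0_less_iff)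
qed

lemma le_card_mult_div_sum:
  fixes t :: "'a::finite \<Rightarrow> real" and c :: real
  assumes "\<And>u. g * t u \<le> c" "\<And>u. 0 < t u"
  shows "g \<le> card (UNIV :: 'a set) * c / (\<Sum>u\<in>UNIV. t u)"
proof -
  have "g * (\<Sum>u\<in>UNIV. t u) \<le> (\<Sum>u\<in>(UNIV :: 'a set). c)"
    unfolding sum_distrib_left by (rule sum_mono) (rule assms(1))
  then show ?thesis
    using assms(2) by (simp add: le_divide_eq sum_pos mult.commute)
qed

lemma eq_card_mult_div_sum_iff:
  fixes t :: "'a::finite \<Rightarrow> real" and c :: real
  assumes "\<And>u. g * t u \<le> c" "\<And>u. 0 < t u"
  shows "g = card (UNIV :: 'a set) * c / (\<Sum>u\<in>UNIV. t u) \<longleftrightarrow> (\<forall>u. g * t u = c)"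
proof -
  have sum_pos: "0 < (\<Sum>u\<in>UNIV. t u)" using assms(2) by (simp add: sum_pos)
  have "(\<Sum>u\<in>UNIV. c - g * t u) = card (UNIV :: 'a set) * c - g * (\<Sum>u\<in>UNIV. t u)"
    by (simp add: sum_subtractf sum_distrib_left)
  then have "g = card (UNIV :: 'a set) * c / (\<Sum>u\<in>UNIV. t u) \<longleftrightarrow> (\<Sum>u\<in>UNIV. c - g * t u) = 0"
    using sum_pos by (auto simp: eq_divide_eq)
  also have "\<dots> \<longleftrightarrow> (\<forall>u. g * t u = c)"
    using assms(1) by (auto simp: sum_nonneg_eq_0_iff)
  finally show ?thesis .
qed

theorem theorem4p2:
  fixes E :: "'a::finite \<Rightarrow> 'a \<Rightarrow> bool"
  assumes "simple_graph E" and "connected_graph E" and "card (UNIV :: 'a set) \<ge> 2"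
  shows "gamma E \<le> real (card (UNIV :: 'a set))^2 / (2 * wiener E)
    \<and> (gamma E = real (card (UNIV :: 'a set))^2 / (2 * wiener E) \<longleftrightarrow> transmission_regular E)"
proof -
  have upper: "gamma E * transmission E u \<le> card (UNIV :: 'a set)" for u
    by (rule gamma_mult_transmission_le[OF assms])
  have positive: "0 < real (transmission E u)" for u
    using transmission_pos[OF assms(2,3)] by simp
  have "real (card (UNIV :: 'a set))^2 / (2 * wiener E)
      = card (UNIV :: 'a set) * real (card (UNIV :: 'a set)) / (\<Sum>u\<in>UNIV. real (transmission E u))"
    by (simp add: two_wiener_eq_sum_transmission power2_eq_square)
  then show ?thesis
    using le_card_mult_div_sum[where t = "\<lambda>u. real (transmission E u)", OF upper positive]
      eq_card_mult_div_sum_iff[where t = "\<lambda>u. real (transmission E u)", OF upper positive]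
      all_gamma_mult_transmission_eq_card_iff[OF assms]
    by simp
qed

end
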